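(* Assume $\operatorname{non}(\mathcal N)=\mathfrak c$. Then $\mathcal{AN}_{\mathfrak c}$ is strongly $2^{\mathfrak c}$-algebrable in $\left(\mathbb R^{\mathbb R}\right)^{\mathfrak c}$.
   Context: For a regular infinite cardinal $\kappa$, a $\kappa$-sequence $(x_\alpha)_{\alpha<\kappa}$ converges to $x$ if for every neighbourhood $U$ of $x$ there is $\alpha_0<\kappa$ with $x_\alpha\in U$ for all $\alpha_0<\alpha<\kappa$; $\left(\mathbb R^{\mathbb R}\right)^{\kappa}$ is the commutative real algebra of $\kappa$-sequences of functions $\mathbb R\to\mathbb R$ with indexwise operations. $\operatorname{non}(\mathcal N)$ is the least cardinality of a non-null subset of $[0,1]$, $\mathfrak c=2^{\aleph_0}$. $\mathcal{AN}_{\kappa}$: $\kappa$-sequences of Lebesgue measurable functions $f_\alpha:\mathbb R\to\mathbb R$ converging pointwise a.e. to a function that is not Lebesgue measurable. $S$ is strongly $\mu$-algebrable if there is a set $X$ of $\mu$ algebraically independent elements such that every nonzero element of the (non-unital) algebra generated by $X$ belongs to $S$. *)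

theory Defs
  imports "HOL-Analysis.Analysis"
begin

text \<open>A continuum-length sequence is indexed by the reals, ordered by a well-order W
  on UNIV which is a cardinal order (initial ordinal), i.e. has order type c.
  Sequences of functions R to R are thus elements of type real => real => real
  (index => point => value); the algebra operations are pointwise.\<close>

definition wconv :: "real rel \<Rightarrow> (real \<Rightarrow> real) \<Rightarrow> real \<Rightarrow> bool" where
  "wconv W s l \<longleftrightarrow>
     (\<forall>U. open U \<and> l \<in> U \<longrightarrow> (\<exists>a0. \<forall>a. (a0, a) \<in> W \<and> a \<noteq> a0 \<longrightarrow> s a \<in> U))"

definition nonN_eq_c :: bool where
  "nonN_eq_c \<longleftrightarrow> (\<forall>A::real set. A \<subseteq> {0..1} \<and> A \<notin> null_sets lebesgue \<longrightarrow>
       (card_of (UNIV::real set), card_of A) \<in> ordLeq)"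

definition AN_c :: "real rel \<Rightarrow> (real \<Rightarrow> real \<Rightarrow> real) set" where
  "AN_c W = {F. (\<forall>a. F a \<in> borel_measurable lebesgue) \<and>
      (\<exists>g. g \<notin> borel_measurable lebesgue \<and> (AE x in lebesgue. wconv W (\<lambda>a. F a x) (g x)))}"

text \<open>Polynomials in variables 0..n-1: coefficient function on exponent vectors
  (monomials), finitely supported.\<close>
definition is_poly :: "nat \<Rightarrow> ((nat \<Rightarrow> nat) \<Rightarrow> real) \<Rightarrow> bool" where
  "is_poly n c \<longleftrightarrow> finite {m. c m \<noteq> 0} \<and> (\<forall>m. c m \<noteq> 0 \<longrightarrow> (\<forall>i\<ge>n. m i = 0))"

definition no_const :: "((nat \<Rightarrow> nat) \<Rightarrow> real) \<Rightarrow> bool" where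
  "no_const c \<longleftrightarrow> c (\<lambda>_. 0) = 0"

definition poly_eval :: "((nat \<Rightarrow> nat) \<Rightarrow> real) \<Rightarrow> (nat \<Rightarrow> real \<Rightarrow> real \<Rightarrow> real)
    \<Rightarrow> real \<Rightarrow> real \<Rightarrow> real" where
  "poly_eval c F = (\<lambda>a x. \<Sum>m\<in>{m. c m \<noteq> 0}. c m * (\<Prod>i\<in>{i. m i \<noteq> 0}. F i a x ^ m i))"

definition alg_independent :: "(real \<Rightarrow> real \<Rightarrow> real) set \<Rightarrow> bool" where
  "alg_independent X \<longleftrightarrow> (\<forall>n c F. is_poly n c \<and> c \<noteq> (\<lambda>_. 0) \<and> inj_on F {..<n} \<and>
       F ` {..<n} \<subseteq> X \<longrightarrow> poly_eval c F \<noteq> (\<lambda>_ _. 0))"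

text \<open>The non-unital algebra generated by X.\<close>
definition gen_algebra :: "(real \<Rightarrow> real \<Rightarrow> real) set \<Rightarrow> (real \<Rightarrow> real \<Rightarrow> real) set" where
  "gen_algebra X = {poly_eval c F | n c F. is_poly n c \<and> no_const c \<and> F ` {..<n} \<subseteq> X}"

definition strongly_algebrable :: "'k rel \<Rightarrow> (real \<Rightarrow> real \<Rightarrow> real) set \<Rightarrow> bool" where
  "strongly_algebrable mu S \<longleftrightarrow> (\<exists>X. (card_of X, mu) \<in> ordIso \<and> alg_independent X \<and>
       (\<forall>f\<in>gen_algebra X. f \<noteq> (\<lambda>_ _. 0) \<longrightarrow> f \<in> S))"

end

theory Submission
  imports Defs "HOL-Computational_Algebra.Polynomial"
begin

text \<open>A transfinite recursion of length \<open>c\<close>, using \<open>non(N) = c\<close>, produces a function \<open>d\<close>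
  from the reals to codes that attains every code on every non-null measurable set. A code is a
  finite list of probe points together with values indexed by membership patterns, so for
  finitely many distinct sets \<open>s\<close> of reals the functions \<open>base_fun s\<close> (the value that \<open>d x\<close> assigns
  to the pattern of \<open>s\<close>) can be prescribed simultaneously on every non-null measurable set. The
  generators are \<open>gen_seq s \<alpha> x = base_fun s x\<close> for \<open>x <\<^sub>W \<alpha>\<close> and \<open>0\<close> otherwise. Initial segments
  of \<open>W\<close> have size \<open>< c\<close> and are therefore null, so a polynomial \<open>P\<close> without constant term in the
  generators is almost everywhere zero at each index, hence measurable, and converges
  everywhere to \<open>x \<mapsto> P (base_fun s\<^sub>1 x, \<dots>, base_fun s\<^sub>n x)\<close>. If \<open>P\<close> is not identically zero, this
  limit takes the value \<open>0\<close> and a nonzero value on every non-null measurable set, so it is not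
  measurable.\<close>

unbundle cardinal_syntax

lemma countable_fun_lepoll_real: "(UNIV::('a::countable \<Rightarrow> real) set) \<lesssim> (UNIV::real set)"
proof -
  obtain j :: "real \<Rightarrow> nat set" where j: "inj j"
    using nat_sets_eqpoll_reals by (meson eqpoll_sym eqpoll_def bij_betw_imp_inj_on)
  define G where "G f = {prod_encode (to_nat i, k) | i k. k \<in> j (f i)}" for f :: "'a \<Rightarrow> real"
  have "k \<in> j (f i) \<longleftrightarrow> prod_encode (to_nat i, k) \<in> G f" for k f i
    unfolding G_def by (auto dest: inj_onD[OF inj_prod_encode, simplified])
  then have "j (f i) = j (g i)" if "G f = G g" for f g i
    using that by blast
  then have "inj G"
    using j by (intro injI ext) (simp add: inj_eq)
  then have "(UNIV::('a \<Rightarrow> real) set) \<lesssim> (UNIV::nat set set)"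
    unfolding lepoll_def by blast
  also have "(UNIV::nat set set) \<lesssim> (UNIV::real set)"
    using nat_sets_eqpoll_reals eqpoll_imp_lepoll by blast
  finally show ?thesis .
qed

lemma list_lepoll_real: "(UNIV::real list set) \<lesssim> (UNIV::real set)"
proof -
  define H where "H xs = (\<lambda>i. if i = 0 then real (length xs) else xs ! (i - 1))"
    for xs :: "real list"
  have "inj H"
  proof (rule injI)
    fix xs ys assume eq: "H xs = H ys"
    have len: "length xs = length ys" using fun_cong[OF eq, of 0] unfolding H_def by simp
    show "xs = ys"
      using fun_cong[OF eq, of "Suc _"] by (intro nth_equalityI[OF len]) (simp add: H_def)
  qed
  then have "(UNIV::real list set) \<lesssim> (UNIV::(nat \<Rightarrow> real) set)"
    unfolding lepoll_def by blast
  also note countable_fun_lepoll_real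
  finally show ?thesis .
qed

lemma times_lepoll_real:
  assumes "A \<lesssim> (UNIV::real set)" "B \<lesssim> (UNIV::real set)"
  shows "A \<times> B \<lesssim> (UNIV::real set)"
proof -
  have "|(UNIV::real set) \<times> (UNIV::real set)| =o |UNIV::real set|"
    by (rule card_of_Times_same_infinite) (simp add: infinite_UNIV_char_0)
  then have "(UNIV::real set) \<times> (UNIV::real set) \<approx> (UNIV::real set)"
    by (simp only: eqpoll_iff_card_of_ordIso)
  then show ?thesis
    using times_lepoll_mono[OF assms] eqpoll_imp_lepoll lepoll_trans by blast
qed

lemma UNIV_not_null: "(UNIV::real set) \<notin> null_sets lebesgue"
  using non_negligible_UNIV negligible_iff_null_sets by blast

lemma small_sets_null:
  fixes B :: "real set"
  assumes nonN: "nonN_eq_c" and small: "|B| <o |UNIV::real set|"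
  shows "B \<in> null_sets lebesgue"
proof -
  have "negligible (B \<inter> {of_int k..of_int k + 1})" for k :: int
  proof -
    define C where "C = (\<lambda>x. x - of_int k) ` (B \<inter> {of_int k..of_int k + 1})"
    have "|C| \<le>o |B|"
      unfolding C_def by (meson card_of_image card_of_mono1 inf_le1 ordLeq_transitive)
    then have "|C| <o |UNIV::real set|"
      using small ordLeq_ordLess_trans by blast
    moreover have "C \<subseteq> {0..1}" unfolding C_def by auto
    ultimately have "negligible C"
      using nonN not_ordLess_ordLeq negligible_iff_null_sets unfolding nonN_eq_c_def by blast
    then have "negligible ((+) (of_int k) ` C)" by (rule negligible_translation)
    moreover have "(+) (of_int k) ` C = B \<inter> {of_int k..of_int k + 1}"
      unfolding C_def image_image by simp
    ultimately show ?thesis by simp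
  qed
  then have "negligible (\<Union>k::int. B \<inter> {of_int k..of_int k + 1})"
    by (intro negligible_countable_Union) auto
  moreover have "B \<subseteq> (\<Union>k::int. B \<inter> {of_int k..of_int k + 1})"
  proof
    fix x assume "x \<in> B"
    then have "x \<in> B \<inter> {of_int \<lfloor>x\<rfloor>..of_int \<lfloor>x\<rfloor> + 1}"
      using of_int_floor_le[of x] real_of_int_floor_add_one_gt[of x] by auto
    then show "x \<in> (\<Union>k::int. B \<inter> {of_int k..of_int k + 1})" by blast
  qed
  ultimately show ?thesis
    using negligible_subset negligible_iff_null_sets by blast
qed

lemma nonnull_card_ge:
  fixes B :: "real set"
  assumes "nonN_eq_c" "B \<notin> null_sets lebesgue"
  shows "|UNIV::real set| \<le>o |B|"
  using small_sets_null[OF assms(1)] assms(2) ordLess_or_ordLeq card_of_Well_order by blast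

lemma nonnull_contains_nonnull_closed:
  assumes "M \<in> sets lebesgue" "M \<notin> null_sets lebesgue"
  obtains C where "closed C" "C \<subseteq> M" "C \<notin> null_sets lebesgue"
proof -
  have "0 < emeasure lebesgue M"
    using assms by (simp add: null_sets_def zero_less_iff_neq_zero)
  then obtain \<epsilon> where "0 < \<epsilon>" "\<epsilon> < emeasure lebesgue M"
    using dense by blast
  then obtain e where e: "0 < e" "ennreal e < emeasure lebesgue M"
    by (metis ennreal_enn2real enn2real_positive_iff less_top order.strict_trans top.not_eq_extremum)
  obtain C where C: "closed C" "C \<subseteq> M" "M - C \<in> lmeasurable"
      "emeasure lebesgue (M - C) < ennreal e"
    using sets_lebesgue_inner_closed[OF assms(1) e(1)] by blast
  have "C \<notin> null_sets lebesgue"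
  proof
    assume "C \<in> null_sets lebesgue"
    then have "emeasure lebesgue M = emeasure lebesgue (M - C)"
      using emeasure_Un_null_set[of "M - C" lebesgue C] C(2,3) by (simp add: Un_absorb2)
    then show False using C(4) e(2) by simp
  qed
  with C that show ?thesis by blast
qed

lemma closed_sets_indexed_by_nat_sets:
  obtains K :: "nat set \<Rightarrow> 'a::second_countable_topology set"
  where "\<And>C. closed C \<Longrightarrow> \<exists>N. C = K N"
proof -
  obtain \<B> :: "'a set set"
    where \<B>: "countable \<B>" "\<And>S. open S \<Longrightarrow> \<exists>U. U \<subseteq> \<B> \<and> S = \<Union>U"
    using univ_second_countable by metis
  define b where "b = from_nat_into \<B>"
  have "\<exists>N. C = - \<Union>(b ` N)" if C: "closed C" for C
  proof -
    obtain U where U: "U \<subseteq> \<B>" "- C = \<Union>U"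
      using \<B>(2)[of "- C"] C by (metis open_Compl)
    have "U \<subseteq> range b"
      using from_nat_into_surj[OF \<B>(1)] U(1) unfolding b_def by (metis image_iff rangeI subset_eq)
    then have "U = b ` {n. b n \<in> U}"
      by auto
    then have "C = - \<Union>(b ` {n. b n \<in> U})"
      using U(2) by (metis double_complement)
    then show ?thesis ..
  qed
  then show ?thesis
    by (rule that)
qed

lemma ex_inj_on_selection:
  fixes A :: "'i \<Rightarrow> 'a set"
  assumes large: "\<And>i. i \<in> I \<Longrightarrow> |UNIV::'i set| \<le>o |A i|"
  obtains p where "inj_on p I" "\<And>i. i \<in> I \<Longrightarrow> p i \<in> A i"
proof -
  define W where "W = |UNIV::'i set|"
  have W: "Card_order W" "Field W = UNIV" "wo_rel W"
    unfolding W_def wo_rel_def by (rule card_of_Card_order, rule Field_card_of, rule card_of_Well_order)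
  define p where "p = wfrec (W - Id) (\<lambda>p i. SOME x. x \<in> A i \<and> x \<notin> p ` underS W i)"
  have p_eq: "p i = (SOME x. x \<in> A i \<and> x \<notin> p ` underS W i)" for i
  proof -
    have "cut p (W - Id) i ` underS W i = p ` underS W i"
      by (rule image_cong) (auto simp: cut_def underS_def)
    then show ?thesis
      unfolding p_def by (subst wfrec[OF wo_rel.WF[OF W(3)]]) (simp add: p_def)
  qed
  have fresh: "p i \<in> A i \<and> p i \<notin> p ` underS W i" if "i \<in> I" for i
  proof -
    have "|underS W i| <o W"
      using card_of_underS[OF W(1)] W(2) by simp
    then have "|p ` underS W i| <o |A i|"
      using ordLeq_ordLess_trans[OF card_of_image] ordLess_ordLeq_trans large[OF that]
      unfolding W_def by blast
    then have "\<not> A i \<subseteq> p ` underS W i"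
      using card_of_mono1 not_ordLess_ordLeq by blast
    then have "\<exists>x. x \<in> A i \<and> x \<notin> p ` underS W i" by blast
    then show ?thesis
      unfolding p_eq[of i] by (rule someI_ex)
  qed
  show ?thesis
  proof (rule that)
    show "p i \<in> A i" if "i \<in> I" for i
      using fresh[OF that] by simp
    show "inj_on p I"
    proof (rule inj_onI, rule ccontr)
      fix i j assume ij: "i \<in> I" "j \<in> I" "p i = p j" "i \<noteq> j"
      have "(i, j) \<in> W \<or> (j, i) \<in> W"
        using wo_rel.TOTALS[OF W(3)] unfolding W(2) by simp
      then have "i \<in> underS W j \<or> j \<in> underS W i"
        using ij(4) unfolding underS_def by auto
      then show False
        using fresh[OF ij(1)] fresh[OF ij(2)] ij(3) by (metis imageI)
    qed
  qed
qed

definition lebesgue_everywhere_surjective :: "(real \<Rightarrow> 'a) \<Rightarrow> bool" where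
  "lebesgue_everywhere_surjective d \<longleftrightarrow>
     (\<forall>M \<in> sets lebesgue. M \<notin> null_sets lebesgue \<longrightarrow> d ` M = UNIV)"

text \<open>The reals enumerate all pairs (code \<open>N\<close> of a closed set, value \<open>q\<close>); distinct points
  \<open>p \<alpha>\<close> are chosen in the non-null closed sets, and \<open>d\<close> reads \<open>q\<close> back off the point.\<close>
lemma ex_lebesgue_everywhere_surjective:
  assumes nonN: "nonN_eq_c" and small: "(UNIV::'a set) \<lesssim> (UNIV::real set)"
  obtains d :: "real \<Rightarrow> 'a" where "lebesgue_everywhere_surjective d"
proof -
  obtain K :: "nat set \<Rightarrow> real set" where K: "\<And>C. closed C \<Longrightarrow> \<exists>N. C = K N"
    using closed_sets_indexed_by_nat_sets by metis
  have "(UNIV::nat set set) \<times> (UNIV::'a set) \<lesssim> (UNIV::real set)"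
    by (rule times_lepoll_real[OF eqpoll_imp_lepoll[OF nat_sets_eqpoll_reals] small])
  then obtain e :: "real \<Rightarrow> nat set \<times> 'a" where "UNIV \<subseteq> range e"
    unfolding lepoll_iff UNIV_Times_UNIV by metis
  then have e: "surj e" by blast
  define I where "I = {\<alpha>. K (fst (e \<alpha>)) \<notin> null_sets lebesgue}"
  have large: "|UNIV::real set| \<le>o |K (fst (e \<alpha>))|" if "\<alpha> \<in> I" for \<alpha>
    using that nonnull_card_ge[OF nonN] unfolding I_def by simp
  obtain p where p: "inj_on p I" "\<And>\<alpha>. \<alpha> \<in> I \<Longrightarrow> p \<alpha> \<in> K (fst (e \<alpha>))"
    using ex_inj_on_selection[of I "\<lambda>\<alpha>. K (fst (e \<alpha>))", OF large] by metis
  define d where "d x = snd (e (inv_into I p x))" for x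
  have "q \<in> d ` M" if M: "M \<in> sets lebesgue" "M \<notin> null_sets lebesgue" for M q
  proof -
    obtain C where C: "closed C" "C \<subseteq> M" "C \<notin> null_sets lebesgue"
      using nonnull_contains_nonnull_closed[OF M] by blast
    obtain N where "C = K N" using K[OF C(1)] by blast
    moreover obtain \<alpha> where \<alpha>: "e \<alpha> = (N, q)" using e by (metis surjD)
    ultimately have "\<alpha> \<in> I" using C(3) unfolding I_def by simp
    then have "p \<alpha> \<in> M" using p(2)[of \<alpha>] \<alpha> \<open>C = K N\<close> C(2) by auto
    moreover have "d (p \<alpha>) = q"
      using \<alpha> inv_into_f_f[OF p(1) \<open>\<alpha> \<in> I\<close>] unfolding d_def by simp
    ultimately show ?thesis by (metis image_eqI)
  qed
  then have "lebesgue_everywhere_surjective d"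
    unfolding lebesgue_everywhere_surjective_def by blast
  then show ?thesis by (rule that)
qed

type_synonym probe_code = "real list \<times> (bool list \<Rightarrow> real)"

definition probe_value :: "real set \<Rightarrow> probe_code \<Rightarrow> real" where
  "probe_value s q = snd q (map (\<lambda>x. x \<in> s) (fst q))"

lemma probe_code_lepoll_real: "(UNIV::probe_code set) \<lesssim> (UNIV::real set)"
  using times_lepoll_real[OF list_lepoll_real countable_fun_lepoll_real] by simp

lemma finite_sets_separated_by_list:
  assumes "finite \<Sigma>"
  obtains xs :: "'a list" where "inj_on (\<lambda>s. map (\<lambda>x. x \<in> s) xs) \<Sigma>"
proof -
  define wit where "wit s s' = (SOME x. x \<in> (s - s') \<union> (s' - s))" for s s' :: "'a set"
  have wit: "wit s s' \<in> (s - s') \<union> (s' - s)" if "s \<noteq> s'" for s s'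
  proof -
    have "\<exists>x. x \<in> (s - s') \<union> (s' - s)" using that by blast
    then show ?thesis unfolding wit_def by (rule someI_ex)
  qed
  have "finite (case_prod wit ` (\<Sigma> \<times> \<Sigma>))" using assms by simp
  then obtain xs where xs: "set xs = case_prod wit ` (\<Sigma> \<times> \<Sigma>)"
    using finite_list by blast
  have "inj_on (\<lambda>s. map (\<lambda>x. x \<in> s) xs) \<Sigma>"
  proof (rule inj_onI, rule ccontr)
    fix s s' assume s: "s \<in> \<Sigma>" "s' \<in> \<Sigma>" "map (\<lambda>x. x \<in> s) xs = map (\<lambda>x. x \<in> s') xs" "s \<noteq> s'"
    have "wit s s' \<in> set xs" using xs s(1,2) by force
    moreover have "\<forall>x\<in>set xs. x \<in> s \<longleftrightarrow> x \<in> s'" using s(3) by (simp add: map_eq_conv)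
    ultimately show False using wit[OF s(4)] by blast
  qed
  then show ?thesis by (rule that)
qed

lemma probe_value_interpolates:
  assumes "finite \<Sigma>"
  obtains q where "\<And>s. s \<in> \<Sigma> \<Longrightarrow> probe_value s q = t s"
proof -
  obtain xs where inj: "inj_on (\<lambda>s. map (\<lambda>x. x \<in> s) xs) \<Sigma>"
    using finite_sets_separated_by_list[OF assms] by metis
  define q where "q = (xs, \<lambda>b. t (inv_into \<Sigma> (\<lambda>s. map (\<lambda>x. x \<in> s) xs) b))"
  have "probe_value s q = t s" if "s \<in> \<Sigma>" for s
    using inv_into_f_f[OF inj that] unfolding probe_value_def q_def by simp
  then show ?thesis by (rule that)
qed

definition peval :: "((nat \<Rightarrow> nat) \<Rightarrow> real) \<Rightarrow> (nat \<Rightarrow> real) \<Rightarrow> real" where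
  "peval c y = (\<Sum>m\<in>{m. c m \<noteq> 0}. c m * (\<Prod>i\<in>{i. m i \<noteq> 0}. y i ^ m i))"

lemma poly_eval_eq_peval: "poly_eval c F a x = peval c (\<lambda>i. F i a x)"
  unfolding poly_eval_def peval_def by simp

lemma is_poly_support:
  assumes "is_poly n c" "c m \<noteq> 0"
  shows "{i. m i \<noteq> 0} \<subseteq> {..<n}"
proof
  fix i assume "i \<in> {i. m i \<noteq> 0}"
  moreover have "\<forall>i\<ge>n. m i = 0" using assms unfolding is_poly_def by blast
  ultimately have "\<not> n \<le> i" by auto
  then show "i \<in> {..<n}" by simp
qed

lemma peval_cong:
  assumes "is_poly n c" "\<And>i. i < n \<Longrightarrow> y i = y' i"
  shows "peval c y = peval c y'"
  unfolding peval_def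
proof (rule sum.cong[OF refl])
  fix m assume "m \<in> {m. c m \<noteq> 0}"
  then have "{i. m i \<noteq> 0} \<subseteq> {..<n}" using is_poly_support[OF assms(1)] by simp
  then show "c m * (\<Prod>i\<in>{i. m i \<noteq> 0}. y i ^ m i) = c m * (\<Prod>i\<in>{i. m i \<noteq> 0}. y' i ^ m i)"
    using assms(2) by (intro arg_cong[where f="(*) (c m)"] prod.cong) auto
qed

lemma peval_zero:
  assumes "is_poly n c"
  shows "peval c (\<lambda>_. 0) = c (\<lambda>_. 0)"
proof -
  have "peval c (\<lambda>_. 0) = (\<Sum>m\<in>{m. c m \<noteq> 0}. if m = (\<lambda>_. 0) then c m else 0)"
    unfolding peval_def
  proof (rule sum.cong[OF refl])
    fix m assume m: "m \<in> {m. c m \<noteq> 0}"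
    show "c m * (\<Prod>i\<in>{i. m i \<noteq> 0}. (0::real) ^ m i) = (if m = (\<lambda>_. 0) then c m else 0)"
    proof (cases "m = (\<lambda>_. 0)")
      case False
      then obtain i where "m i \<noteq> 0" by auto
      moreover have "finite {i. m i \<noteq> 0}"
        using is_poly_support[OF assms] m finite_subset by blast
      ultimately show ?thesis
        by (auto simp: prod_zero_iff)
    qed simp
  qed
  also have "\<dots> = c (\<lambda>_. 0)"
    using assms unfolding is_poly_def by (simp add: sum.delta')
  finally show ?thesis .
qed

lemma base_expansion_inj:
  fixes m m' :: "nat \<Rightarrow> nat"
  assumes "\<And>i. i < n \<Longrightarrow> m i < N" "\<And>i. i < n \<Longrightarrow> m' i < N"
    and "(\<Sum>i<n. m i * N ^ i) = (\<Sum>i<n. m' i * N ^ i)"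
    and "i < n"
  shows "m i = m' i"
  using assms
proof (induction n arbitrary: m m' i)
  case (Suc n)
  have shift: "(\<Sum>i<Suc n. f i * N ^ i) = f 0 + N * (\<Sum>i<n. f (Suc i) * N ^ i)" for f
    unfolding sum.lessThan_Suc_shift by (simp add: sum_distrib_left algebra_simps)
  have eq: "m 0 + N * (\<Sum>i<n. m (Suc i) * N ^ i) = m' 0 + N * (\<Sum>i<n. m' (Suc i) * N ^ i)"
    using Suc.prems(3) unfolding shift .
  have lt: "m 0 < N" "m' 0 < N" using Suc.prems(1,2) by auto
  then have m0: "m 0 = m' 0"
    using arg_cong[OF eq, of "\<lambda>k. k mod N"] by simp
  with eq lt have "(\<Sum>i<n. m (Suc i) * N ^ i) = (\<Sum>i<n. m' (Suc i) * N ^ i)"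
    by simp
  then have "m (Suc j) = m' (Suc j)" if "j < n" for j
    using Suc.IH[of "\<lambda>i. m (Suc i)" "\<lambda>i. m' (Suc i)" j] Suc.prems(1,2) that by simp
  then show ?case
    using m0 Suc.prems(4) by (cases i) auto
qed simp

lemma peval_kronecker:
  assumes P: "is_poly n c"
  shows "peval c (\<lambda>i. t ^ N ^ i) = poly (\<Sum>m | c m \<noteq> 0. monom (c m) (\<Sum>i<n. m i * N ^ i)) t"
  unfolding peval_def poly_sum poly_monom
proof (rule sum.cong[OF refl])
  fix m assume m: "m \<in> {m. c m \<noteq> 0}"
  have "(\<Prod>i\<in>{i. m i \<noteq> 0}. (t ^ N ^ i) ^ m i) = t ^ (\<Sum>i\<in>{i. m i \<noteq> 0}. m i * N ^ i)"
    by (simp add: power_sum power_mult[symmetric] mult.commute)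
  also have "(\<Sum>i\<in>{i. m i \<noteq> 0}. m i * N ^ i) = (\<Sum>i<n. m i * N ^ i)"
    using is_poly_support[OF P] m by (intro sum.mono_neutral_left) auto
  finally show "c m * (\<Prod>i\<in>{i. m i \<noteq> 0}. (t ^ N ^ i) ^ m i) = c m * t ^ (\<Sum>i<n. m i * N ^ i)"
    by simp
qed

text \<open>With \<open>N\<close> exceeding all exponents, the Kronecker substitution gives distinct monomials
  distinct degrees, so the resulting univariate polynomial is nonzero and has a non-root.\<close>
lemma ex_peval_nonzero:
  assumes P: "is_poly n c" and nz: "c \<noteq> (\<lambda>_. 0)"
  obtains y where "peval c y \<noteq> 0"
proof -
  define M where "M = {m. c m \<noteq> 0}"
  have finM: "finite M" using P unfolding is_poly_def M_def by simp
  obtain m0 where m0: "m0 \<in> M" using nz unfolding M_def by auto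
  define N where "N = Suc (\<Sum>m\<in>M. \<Sum>i<n. m i)"
  have bound: "m i < N" if "m \<in> M" "i < n" for m i
  proof -
    have "m i \<le> (\<Sum>i<n. m i)" using that(2) by (intro member_le_sum) auto
    also have "\<dots> \<le> (\<Sum>m\<in>M. \<Sum>i<n. m i)" using that(1) finM by (intro member_le_sum) auto
    finally show ?thesis unfolding N_def by simp
  qed
  define E where "E m = (\<Sum>i<n. m i * N ^ i)" for m :: "nat \<Rightarrow> nat"
  have E_inj: "m = m'" if "m \<in> M" "m' \<in> M" "E m = E m'" for m m'
  proof
    fix i
    show "m i = m' i"
    proof (cases "i < n")
      case True
      then show ?thesis
        using base_expansion_inj[of n m N m' i] bound that unfolding E_def by blast
    next
      case False
      have "\<forall>i\<ge>n. m i = 0" "\<forall>i\<ge>n. m' i = 0"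
        using that(1,2) P unfolding is_poly_def M_def by auto
      then show ?thesis using False by simp
    qed
  qed
  define p where "p = (\<Sum>m\<in>M. monom (c m) (E m))"
  have "coeff p (E m0) = (\<Sum>m\<in>M. if m = m0 then c m else 0)"
    unfolding p_def coeff_sum
    by (rule sum.cong[OF refl]) (auto simp: coeff_monom dest: E_inj[OF _ m0])
  also have "\<dots> = c m0" using finM m0 by (simp add: sum.delta')
  finally have "p \<noteq> 0" using m0 unfolding M_def by auto
  then obtain t where "poly p t \<noteq> 0"
    using poly_roots_finite ex_new_if_finite[OF infinite_UNIV_char_0] by blast
  then have "peval c (\<lambda>i. t ^ N ^ i) \<noteq> 0"
    unfolding peval_kronecker[OF P] p_def E_def M_def .
  then show ?thesis by (rule that)
qed

lemma not_measurable_if_zero_and_nonzero_on_nonnull: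
  fixes g :: "real \<Rightarrow> real"
  assumes "\<And>M. M \<in> sets lebesgue \<Longrightarrow> M \<notin> null_sets lebesgue \<Longrightarrow> \<exists>x\<in>M. g x = 0"
    and "\<And>M. M \<in> sets lebesgue \<Longrightarrow> M \<notin> null_sets lebesgue \<Longrightarrow> \<exists>x\<in>M. g x \<noteq> 0"
  shows "g \<notin> borel_measurable lebesgue"
proof
  assume "g \<in> borel_measurable lebesgue"
  then have Z: "g -` {0} \<in> sets lebesgue" "- g -` {0} \<in> sets lebesgue"
    using measurable_sets[of g lebesgue borel "{0}"] by (auto simp: Compl_in_sets_lebesgue)
  have "g -` {0} \<notin> null_sets lebesgue \<or> - g -` {0} \<notin> null_sets lebesgue"
    using null_sets.Un[of "g -` {0}" lebesgue "- g -` {0}"] UNIV_not_null by auto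
  then show False
  proof
    assume "g -` {0} \<notin> null_sets lebesgue"
    then show False using assms(2)[OF Z(1)] by auto
  next
    assume "- g -` {0} \<notin> null_sets lebesgue"
    then show False using assms(1)[OF Z(2)] by auto
  qed
qed

locale AN_generators =
  fixes W :: "real rel" and d :: "real \<Rightarrow> probe_code"
  assumes card_order: "card_order W"
    and nonN: "nonN_eq_c"
    and d_surjective: "lebesgue_everywhere_surjective d"
begin

definition base_fun :: "real set \<Rightarrow> real \<Rightarrow> real" where
  "base_fun s x = probe_value s (d x)"

definition gen_seq :: "real set \<Rightarrow> real \<Rightarrow> real \<Rightarrow> real" where
  "gen_seq s a x = (if x \<in> underS W a then base_fun s x else 0)"

lemma base_fun_realizes:
  assumes "M \<in> sets lebesgue" "M \<notin> null_sets lebesgue" "finite \<Sigma>"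
  shows "\<exists>x\<in>M. \<forall>s\<in>\<Sigma>. base_fun s x = t s"
proof -
  obtain q where q: "\<And>s. s \<in> \<Sigma> \<Longrightarrow> probe_value s q = t s"
    using probe_value_interpolates[OF assms(3)] by metis
  have "q \<in> d ` M"
    using d_surjective assms(1,2) unfolding lebesgue_everywhere_surjective_def by blast
  then obtain x where "x \<in> M" "d x = q" by blast
  then show ?thesis
    using q unfolding base_fun_def by blast
qed

lemma base_fun_realizes_UNIV:
  assumes "finite \<Sigma>"
  shows "\<exists>x. \<forall>s\<in>\<Sigma>. base_fun s x = t s"
proof -
  have "UNIV \<in> sets lebesgue"
    using sets.top[of lebesgue] by simp
  then show ?thesis using base_fun_realizes[OF _ UNIV_not_null assms] by blast
qed

lemma Card_order_W: "Card_order W" and Field_W: "Field W = UNIV"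
  using card_order_on_Card_order[OF card_order] by auto

lemma wo_rel_W: "wo_rel W"
  using Card_order_W unfolding wo_rel_def card_order_on_def by simp

lemma underS_null: "underS W a \<in> null_sets lebesgue"
proof (rule small_sets_null[OF nonN])
  have "|underS W a| <o W"
    using card_of_underS[OF Card_order_W] Field_W by simp
  then show "|underS W a| <o |UNIV :: real set|"
    using card_of_unique[OF card_order] ordLess_ordIso_trans by blast
qed

lemma in_underS_later: "\<exists>a. x \<in> underS W a"
proof -
  have "under W x \<noteq> UNIV"
    using Card_order_infinite_not_under[OF Card_order_W] Field_W by (simp add: infinite_UNIV_char_0) metis
  then obtain a where "(a, x) \<notin> W"
    by (auto simp: under_def)
  moreover have "(a, x) \<in> W \<or> (x, a) \<in> W"
    using wo_rel.TOTALS[OF wo_rel_W] unfolding Field_W by simp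
  moreover have "(x, x) \<in> W"
    using wo_rel.REFL[OF wo_rel_W] unfolding Field_W refl_on_def by simp
  ultimately have "x \<in> underS W a"
    unfolding underS_def by auto
  then show ?thesis ..
qed

lemma inj_gen_seq: "inj gen_seq"
proof (rule injI, rule ccontr)
  fix s s' assume eq: "gen_seq s = gen_seq s'" and "s \<noteq> s'"
  obtain x where x: "\<forall>r\<in>{s, s'}. base_fun r x = (if r = s then 1 else 0)"
    using base_fun_realizes_UNIV[of "{s, s'}" "\<lambda>r. if r = s then 1 else 0"] by auto
  obtain a where "x \<in> underS W a" using in_underS_later by blast
  then have "gen_seq s a x = 1" "gen_seq s' a x = 0"
    using x \<open>s \<noteq> s'\<close> unfolding gen_seq_def by auto
  then show False using eq by simp
qed

lemma ex_gen_seq_indices: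
  assumes "F ` {..<n} \<subseteq> range gen_seq"
  obtains \<sigma> where "\<And>i. i < n \<Longrightarrow> F i = gen_seq (\<sigma> i)"
proof -
  have "\<forall>i\<in>{..<n}. \<exists>s. F i = gen_seq s" using assms by blast
  then obtain \<sigma> where "\<forall>i\<in>{..<n}. F i = gen_seq (\<sigma> i)" by metis
  then show ?thesis using that by simp
qed

lemma poly_eval_gen_seq:
  assumes "is_poly n c" "\<And>i. i < n \<Longrightarrow> F i = gen_seq (\<sigma> i)"
  shows "poly_eval c F a x =
    (if x \<in> underS W a then peval c (\<lambda>i. base_fun (\<sigma> i) x) else c (\<lambda>_. 0))"
  unfolding poly_eval_eq_peval
  using peval_cong[OF assms(1), of "\<lambda>i. F i a x"] peval_zero[OF assms(1)] assms(2)
  by (simp add: gen_seq_def)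

lemma alg_independent_gen_seq: "alg_independent (range gen_seq)"
  unfolding alg_independent_def
proof (intro allI impI)
  fix n c F
  assume "is_poly n c \<and> c \<noteq> (\<lambda>_. 0) \<and> inj_on F {..<n} \<and> F ` {..<n} \<subseteq> range gen_seq"
  then have P: "is_poly n c" and nz: "c \<noteq> (\<lambda>_. 0)" and F: "inj_on F {..<n}"
    and sub: "F ` {..<n} \<subseteq> range gen_seq" by auto
  obtain \<sigma> where \<sigma>: "\<And>i. i < n \<Longrightarrow> F i = gen_seq (\<sigma> i)"
    using ex_gen_seq_indices[OF sub] by metis
  have \<sigma>_inj: "inj_on \<sigma> {..<n}"
    using F \<sigma> by (auto simp: inj_on_def)
  obtain y where y: "peval c y \<noteq> 0"
    using ex_peval_nonzero[OF P nz] by metis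
  obtain x where x: "\<forall>s\<in>\<sigma> ` {..<n}. base_fun s x = y (the_inv_into {..<n} \<sigma> s)"
    using base_fun_realizes_UNIV[of "\<sigma> ` {..<n}" "\<lambda>s. y (the_inv_into {..<n} \<sigma> s)"] by auto
  obtain a where a: "x \<in> underS W a" using in_underS_later by blast
  have "peval c (\<lambda>i. base_fun (\<sigma> i) x) = peval c y"
    using x the_inv_into_f_f[OF \<sigma>_inj] by (intro peval_cong[OF P]) auto
  then have "poly_eval c F a x \<noteq> 0"
    using poly_eval_gen_seq[OF P \<sigma>] a y by simp
  then show "poly_eval c F \<noteq> (\<lambda>_ _. 0)" by auto
qed

lemma gen_algebra_gen_seq_AN:
  assumes "f \<in> gen_algebra (range gen_seq)" and "f \<noteq> (\<lambda>_ _. 0)"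
  shows "f \<in> AN_c W"
proof -
  obtain n c F where f: "f = poly_eval c F" and P: "is_poly n c" and "no_const c"
    and sub: "F ` {..<n} \<subseteq> range gen_seq"
    using assms(1) unfolding gen_algebra_def by blast
  obtain \<sigma> where \<sigma>: "\<And>i. i < n \<Longrightarrow> F i = gen_seq (\<sigma> i)"
    using ex_gen_seq_indices[OF sub] by metis
  define G where "G x = peval c (\<lambda>i. base_fun (\<sigma> i) x)" for x
  have f_eq: "f a x = (if x \<in> underS W a then G x else 0)" for a x
    using poly_eval_gen_seq[OF P \<sigma>] \<open>no_const c\<close> unfolding f G_def no_const_def by simp
  have "f a \<in> borel_measurable lebesgue" for a
  proof -
    have "AE x in lebesgue. x \<notin> underS W a" using underS_null by (rule AE_not_in)
    then have "AE x in lebesgue. 0 = f a x" by eventually_elim (simp add: f_eq)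
    then show ?thesis by (rule borel_measurable_AE[rotated]) simp
  qed
  moreover have "wconv W (\<lambda>a. f a x) (G x)" for x
    unfolding wconv_def using f_eq by (metis underS_I)
  moreover have "G \<notin> borel_measurable lebesgue"
  proof (rule not_measurable_if_zero_and_nonzero_on_nonnull)
    have fin: "finite (\<sigma> ` {..<n})" by simp
    obtain a0 x0 where "f a0 x0 \<noteq> 0" using assms(2) by blast
    then have G0: "G x0 \<noteq> 0" using f_eq by (auto split: if_splits)
    show "\<exists>x\<in>M. G x \<noteq> 0"
      if M: "M \<in> sets lebesgue" "M \<notin> null_sets lebesgue" for M :: "real set"
    proof -
      obtain x where x: "x \<in> M" "\<forall>s\<in>\<sigma> ` {..<n}. base_fun s x = base_fun s x0"
        using base_fun_realizes[OF M fin, of "\<lambda>s. base_fun s x0"] by blast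
      have "G x = G x0" unfolding G_def using x(2) by (intro peval_cong[OF P]) auto
      then show ?thesis using x(1) G0 by metis
    qed
    show "\<exists>x\<in>M. G x = 0"
      if M: "M \<in> sets lebesgue" "M \<notin> null_sets lebesgue" for M :: "real set"
    proof -
      obtain x where x: "x \<in> M" "\<forall>s\<in>\<sigma> ` {..<n}. base_fun s x = 0"
        using base_fun_realizes[OF M fin, of "\<lambda>_. 0"] by blast
      have "G x = peval c (\<lambda>_. 0)" unfolding G_def using x(2) by (intro peval_cong[OF P]) auto
      then show ?thesis
        using x(1) peval_zero[OF P] \<open>no_const c\<close> unfolding no_const_def by auto
    qed
  qed
  ultimately show ?thesis
    unfolding AN_c_def by blast
qed

end

theorem mainTheorem17:
  fixes W :: "real rel"
  assumes "card_order W"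
    and "nonN_eq_c"
  shows "strongly_algebrable (card_of (Pow (UNIV::real set))) (AN_c W)"
proof -
  obtain d :: "real \<Rightarrow> probe_code" where "lebesgue_everywhere_surjective d"
    using ex_lebesgue_everywhere_surjective[OF assms(2) probe_code_lepoll_real] by metis
  then interpret AN_generators W d
    using assms by unfold_locales
  have "|range gen_seq| =o |Pow (UNIV::real set)|"
    using card_of_ordIso inj_gen_seq ordIso_symmetric
    by (metis Pow_UNIV bij_betw_def)
  then show ?thesis
    unfolding strongly_algebrable_def
    using alg_independent_gen_seq gen_algebra_gen_seq_AN by blast
qed

end
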